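(* If a WCMDP is symmetric, then for every stationary Markov policy $\pi$ there exists a permutation invariant stationary Markov policy $\bar\pi$ such that \[ \mathbf{V}_0^{\bar\pi}=\Big(\frac1N\sum_{n=1}^N V^{\pi}_{0,n}\Big)\mathbf{1}, \] where $\mathbf{1}\in\mathbb{R}^N$ is the all-ones vector.
   Context: A WCMDP consists of $N$ sub-MDPs $n\in[N]$, each with finite state set $\mathcal{S}_n$, finite action set $\mathcal{A}_n$, transition kernel $p_n(s'|s,a)$ and reward $r_n(s,a)\in\mathbb{R}$, and a discount factor $\gamma\in[0,1)$. The joint state space is $\mathcal{S}^{(N)}=\prod_n\mathcal{S}_n$; the joint feasible action set is $\mathcal{A}^{(N)}=\{(a_1,\dots,a_N): a_n\in\mathcal{A}_n,\ \sum_{n=1}^N d_{k,n}(a_n)\le b_k\ \forall k\in[K]\}$ with $d_{k,n}\ge 0$, $b_k\ge0$, and an idle action consuming no resource. Joint transitions are $P^{(N)}(\mathbf{s}'|\mathbf{s},\mathbf{a})=\prod_{n}p_n(s'_n|s_n,a_n)$ and the vector reward is $\mathbf{r}(\mathbf{s},\mathbf{a})=(r_1(s_1,a_1),\dots,r_N(s_N,a_N))$. The initial joint state is drawn from a distribution $\boldsymbol{\mu}$ on $\mathcal{S}^{(N)}$. A stationary Markov policy $\pi$ gives probabilities $\pi(\mathbf{s},\mathbf{a})$ over $\mathbf{a}\in\mathcal{A}^{(N)}$ for each $\mathbf{s}$. The value vector is $\mathbf{V}_0^{\pi}=\mathbb{E}_{\pi}\big[\sum_{t\ge0}\gamma^t\mathbf{r}(\mathbf{s}_t,\mathbf{a}_t)\,\big|\,\mathbf{s}_0\sim\boldsymbol{\mu}\big]\in\mathbb{R}^N$,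 with components $V^{\pi}_{0,n}$. Permutations: for a permutation $\sigma$ of $[N]$, the permutation operator $Q$ acts on any $N$-tuple $\mathbf{v}$ by $(Q\mathbf{v})_n=v_{\sigma(n)}$; it acts in the same way on joint states and joint actions. $\mathcal{G}^N$ denotes the set of all $N!$ such operators. The WCMDP is symmetric if: (1) all sub-MDPs are identical ($\mathcal{S}_n=\mathcal{S}$, $\mathcal{A}_n=\mathcal{A}$, $p_n=p$, $r_n=r$ for all $n$); (2) resource consumption is symmetric ($d_{k,n}=d_k$ for all $n$); (3) $\boldsymbol{\mu}(\mathbf{s}_0)=\boldsymbol{\mu}(Q\mathbf{s}_0)$ for all $\mathbf{s}_0$ and all $Q\in\mathcal{G}^N$. A stationary Markov policy $\pi$ is permutation invariant if $\pi(\mathbf{s},\mathbf{a})=\pi(Q\mathbf{s},Q\mathbf{a})$ for all $Q\in\mathcal{G}^N$, $\mathbf{s}$, $\mathbf{a}$. *)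

theory Defs
  imports "HOL-Analysis.Analysis" "HOL-Combinatorics.Permutations"
begin

text \<open>A weakly coupled MDP. Sub-MDPs are indexed by n in {..<N} (i.e. 0..N-1),
  resource constraints by k in {..<K}.\<close>
record ('s, 'a) wcmdp =
  narms  :: nat
  nres   :: nat
  St     :: "nat \<Rightarrow> 's set"
  Ac     :: "nat \<Rightarrow> 'a set"
  trans  :: "nat \<Rightarrow> 's \<Rightarrow> 'a \<Rightarrow> 's \<Rightarrow> real"   (* p_n(s'|s,a) = trans n s a s' *)
  rew    :: "nat \<Rightarrow> 's \<Rightarrow> 'a \<Rightarrow> real"
  cons   :: "nat \<Rightarrow> nat \<Rightarrow> 'a \<Rightarrow> real"      (* d_{k,n}(a) = cons k n a *)
  budget :: "nat \<Rightarrow> real"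
  disc   :: real
  init   :: "(nat \<Rightarrow> 's) \<Rightarrow> real"

definition joint_states :: "('s,'a) wcmdp \<Rightarrow> (nat \<Rightarrow> 's) set" where
  "joint_states M = PiE {..<narms M} (St M)"

definition joint_actions :: "('s,'a) wcmdp \<Rightarrow> (nat \<Rightarrow> 'a) set" where
  "joint_actions M = {a \<in> PiE {..<narms M} (Ac M).
      \<forall>k<nres M. (\<Sum>n<narms M. cons M k n (a n)) \<le> budget M k}"

definition joint_trans :: "('s,'a) wcmdp \<Rightarrow> (nat \<Rightarrow> 's) \<Rightarrow> (nat \<Rightarrow> 'a) \<Rightarrow> (nat \<Rightarrow> 's) \<Rightarrow> real" where
  "joint_trans M s a s' = (\<Prod>n<narms M. trans M n (s n) (a n) (s' n))"

definition wf_wcmdp :: "('s,'a) wcmdp \<Rightarrow> bool" where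
  "wf_wcmdp M \<longleftrightarrow>
     (\<forall>n<narms M. finite (St M n) \<and> St M n \<noteq> {} \<and> finite (Ac M n) \<and> Ac M n \<noteq> {}) \<and>
     (\<forall>n<narms M. \<forall>s\<in>St M n. \<forall>a\<in>Ac M n.
         (\<forall>s'\<in>St M n. trans M n s a s' \<ge> 0) \<and> (\<Sum>s'\<in>St M n. trans M n s a s') = 1) \<and>
     (\<forall>k<nres M. \<forall>n<narms M. \<forall>a\<in>Ac M n. cons M k n a \<ge> 0) \<and>
     (\<forall>k<nres M. budget M k \<ge> 0) \<and>
     (\<forall>n<narms M. \<exists>idle\<in>Ac M n. \<forall>k<nres M. cons M k n idle = 0) \<and>
     0 \<le> disc M \<and> disc M < 1 \<and>
     (\<forall>s\<in>joint_states M. init M s \<ge> 0) \<and> (\<Sum>s\<in>joint_states M. init M s) = 1"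

definition permute :: "(nat \<Rightarrow> nat) \<Rightarrow> (nat \<Rightarrow> 'b) \<Rightarrow> (nat \<Rightarrow> 'b)" where
  "permute \<sigma> v = (\<lambda>n. v (\<sigma> n))"

definition symmetric_wcmdp :: "('s,'a) wcmdp \<Rightarrow> bool" where
  "symmetric_wcmdp M \<longleftrightarrow>
     (\<forall>n<narms M. St M n = St M 0 \<and> Ac M n = Ac M 0 \<and>
        (\<forall>s\<in>St M 0. \<forall>a\<in>Ac M 0. rew M n s a = rew M 0 s a \<and>
            (\<forall>s'\<in>St M 0. trans M n s a s' = trans M 0 s a s'))) \<and>
     (\<forall>k<nres M. \<forall>n<narms M. \<forall>a\<in>Ac M 0. cons M k n a = cons M k 0 a) \<and>
     (\<forall>\<sigma>. \<sigma> permutes {..<narms M} \<longrightarrow>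
        (\<forall>s\<in>joint_states M. init M s = init M (permute \<sigma> s)))"

definition is_policy :: "('s,'a) wcmdp \<Rightarrow> ((nat \<Rightarrow> 's) \<Rightarrow> (nat \<Rightarrow> 'a) \<Rightarrow> real) \<Rightarrow> bool" where
  "is_policy M \<pi> \<longleftrightarrow>
     (\<forall>s\<in>joint_states M.
        (\<forall>a. \<pi> s a \<ge> 0) \<and> (\<forall>a. a \<notin> joint_actions M \<longrightarrow> \<pi> s a = 0) \<and>
        (\<Sum>a\<in>joint_actions M. \<pi> s a) = 1)"

definition perm_invariant :: "('s,'a) wcmdp \<Rightarrow> ((nat \<Rightarrow> 's) \<Rightarrow> (nat \<Rightarrow> 'a) \<Rightarrow> real) \<Rightarrow> bool" where
  "perm_invariant M \<pi> \<longleftrightarrow>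
     (\<forall>\<sigma>. \<sigma> permutes {..<narms M} \<longrightarrow> (\<forall>s a. \<pi> s a = \<pi> (permute \<sigma> s) (permute \<sigma> a)))"

primrec state_dist :: "('s,'a) wcmdp \<Rightarrow> ((nat \<Rightarrow> 's) \<Rightarrow> (nat \<Rightarrow> 'a) \<Rightarrow> real) \<Rightarrow> nat \<Rightarrow> (nat \<Rightarrow> 's) \<Rightarrow> real" where
  "state_dist M \<pi> 0 = init M"
| "state_dist M \<pi> (Suc t) = (\<lambda>s'. \<Sum>s\<in>joint_states M. \<Sum>a\<in>joint_actions M.
        state_dist M \<pi> t s * \<pi> s a * joint_trans M s a s')"

definition value_vec :: "('s,'a) wcmdp \<Rightarrow> ((nat \<Rightarrow> 's) \<Rightarrow> (nat \<Rightarrow> 'a) \<Rightarrow> real) \<Rightarrow> nat \<Rightarrow> real" where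
  "value_vec M \<pi> n = (\<Sum>t. disc M ^ t * (\<Sum>s\<in>joint_states M. \<Sum>a\<in>joint_actions M.
        state_dist M \<pi> t s * \<pi> s a * rew M n (s n) (a n)))"

end

theory Submission
  imports Defs
begin

text \<open>
  The occupation measure x(s,a) = \<Sum>_t \<gamma>^t Pr(s_t = s, a_t = a) of a policy is a nonnegative
  solution of the balance equations
  \<Sum>_a x(s',a) = \<mu>(s') + \<gamma> \<Sum>_(s,a) x(s,a) P(s'|s,a),
  and conversely every such solution is the occupation measure of the policy
  x(s,a) / \<Sum>_b x(s,b), because for a fixed policy the balance equations have a unique solution.
  Values are linear in the occupation measure. In a symmetric WCMDP relabelling the arms by a
  permutation \<sigma> maps solutions to solutions and moves the value of arm n to arm \<sigma>\<inverse>(n). Hence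
  the average of the relabelled occupation measures over all N! permutations is a permutation
  invariant solution, and its policy gives every arm the average value.
\<close>

type_synonym ('s, 'a) state_action_fun = "(nat \<Rightarrow> 's) \<Rightarrow> (nat \<Rightarrow> 'a) \<Rightarrow> real"

lemma permute_permute: "permute \<sigma> (permute \<tau> v) = permute (\<tau> \<circ> \<sigma>) v"
  by (simp add: permute_def)

lemma permute_inv_permute: "\<sigma> permutes I \<Longrightarrow> permute (inv \<sigma>) (permute \<sigma> v) = v"
  by (simp add: permute_def permutes_inverses(1))

lemma permute_permute_inv: "\<sigma> permutes I \<Longrightarrow> permute \<sigma> (permute (inv \<sigma>) v) = v"
  by (simp add: permute_def permutes_inverses(2))

lemma permute_in_PiE_iff:
  assumes "\<sigma> permutes I"
  shows "permute \<sigma> v \<in> PiE I (\<lambda>_. B) \<longleftrightarrow> v \<in> PiE I (\<lambda>_. B)"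
proof -
  have closed: "permute \<rho> w \<in> PiE I (\<lambda>_. B)" if "\<rho> permutes I" "w \<in> PiE I (\<lambda>_. B)" for \<rho> w
    using that
    by (auto simp: permute_def PiE_iff extensional_def permutes_in_image permutes_not_in)
  show ?thesis
    using closed[OF assms] closed[OF permutes_inv[OF assms], of "permute \<sigma> v"]
      permute_inv_permute[OF assms] by metis
qed

lemma sum_permute_reindex:
  assumes "\<sigma> permutes I" and "\<And>v. permute \<sigma> v \<in> A \<longleftrightarrow> v \<in> A"
  shows "(\<Sum>v\<in>A. g (permute \<sigma> v)) = (\<Sum>v\<in>A. g v)"
  by (rule sum.reindex_bij_witness[where i = "permute (inv \<sigma>)" and j = "permute \<sigma>"])
    (use assms(2) permute_inv_permute[OF assms(1)] permute_permute_inv[OF assms(1)] in metis)+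

lemma sum_permutations_apply:
  fixes f :: "'a \<Rightarrow> 'b::comm_semiring_1"
  assumes "finite S" and "i \<in> S"
  shows "of_nat (card S) * (\<Sum>\<sigma> | \<sigma> permutes S. f (\<sigma> i)) = of_nat (fact (card S)) * sum f S"
proof -
  let ?G = "{\<sigma>. \<sigma> permutes S}"
  have independent: "(\<Sum>\<sigma>\<in>?G. f (\<sigma> j)) = (\<Sum>\<sigma>\<in>?G. f (\<sigma> i))" if "j \<in> S" for j
    using sum_permutations_compose_right[OF permutes_swap_id[OF that assms(2)], of "\<lambda>\<sigma>. f (\<sigma> i)"]
    by simp
  have "of_nat (card S) * (\<Sum>\<sigma>\<in>?G. f (\<sigma> i)) = (\<Sum>j\<in>S. \<Sum>\<sigma>\<in>?G. f (\<sigma> j))"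
    using independent by simp
  also have "\<dots> = (\<Sum>\<sigma>\<in>?G. \<Sum>j\<in>S. f (\<sigma> j))"
    by (rule sum.swap)
  also have "\<dots> = (\<Sum>\<sigma>\<in>?G. sum f S)"
    by (rule sum.cong[OF refl]) (use sum.permute[of _ S f] in \<open>simp add: comp_def\<close>)
  also have "\<dots> = of_nat (fact (card S)) * sum f S"
    using card_permutations[OF refl assms(1)] by simp
  finally show ?thesis .
qed

lemma sum_kernel_mass:
  fixes K :: "'x \<Rightarrow> 'x \<Rightarrow> 'b::semiring_1"
  assumes "\<And>s. s \<in> S \<Longrightarrow> (\<Sum>s'\<in>S. K s s') = 1"
  shows "(\<Sum>s'\<in>S. \<Sum>s\<in>S. f s * K s s') = (\<Sum>s\<in>S. f s)"
proof -
  have "(\<Sum>s'\<in>S. \<Sum>s\<in>S. f s * K s s') = (\<Sum>s\<in>S. \<Sum>s'\<in>S. f s * K s s')"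
    by (rule sum.swap)
  also have "\<dots> = (\<Sum>s\<in>S. f s * (\<Sum>s'\<in>S. K s s'))"
    by (simp add: sum_distrib_left)
  finally show ?thesis
    using assms by simp
qed

text \<open>Since K is stochastic, the difference e of two solutions satisfies \<Sum>|e| \<le> \<gamma> \<Sum>|e|.\<close>
lemma discounted_balance_unique:
  fixes K :: "'x \<Rightarrow> 'x \<Rightarrow> real"
  assumes "finite S" "0 \<le> \<gamma>" "\<gamma> < 1"
    and K_nonneg: "\<And>s s'. s \<in> S \<Longrightarrow> s' \<in> S \<Longrightarrow> 0 \<le> K s s'"
    and K_stochastic: "\<And>s. s \<in> S \<Longrightarrow> (\<Sum>s'\<in>S. K s s') = 1"
    and u: "\<And>s'. s' \<in> S \<Longrightarrow> u s' = b s' + \<gamma> * (\<Sum>s\<in>S. u s * K s s')"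
    and v: "\<And>s'. s' \<in> S \<Longrightarrow> v s' = b s' + \<gamma> * (\<Sum>s\<in>S. v s * K s s')"
    and "s\<^sub>0 \<in> S"
  shows "u s\<^sub>0 = v s\<^sub>0"
proof -
  define e where "e s = \<bar>u s - v s\<bar>" for s
  have e_le: "e s' \<le> \<gamma> * (\<Sum>s\<in>S. e s * K s s')" if "s' \<in> S" for s'
  proof -
    have "u s' - v s' = \<gamma> * (\<Sum>s\<in>S. (u s - v s) * K s s')"
      using u[OF that] v[OF that] by (simp add: sum_subtractf left_diff_distrib right_diff_distrib)
    then have "e s' = \<gamma> * \<bar>\<Sum>s\<in>S. (u s - v s) * K s s'\<bar>"
      using \<open>0 \<le> \<gamma>\<close> by (simp add: e_def abs_mult)
    also have "\<dots> \<le> \<gamma> * (\<Sum>s\<in>S. e s * K s s')"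
      using K_nonneg that \<open>0 \<le> \<gamma>\<close>
      by (intro mult_left_mono order.trans[OF sum_abs] sum_mono) (auto simp: e_def abs_mult)
    finally show ?thesis .
  qed
  have "(\<Sum>s\<in>S. e s) \<le> \<gamma> * (\<Sum>s'\<in>S. \<Sum>s\<in>S. e s * K s s')"
    using e_le by (simp add: sum_distrib_left sum_mono)
  also have "\<dots> = \<gamma> * (\<Sum>s\<in>S. e s)"
    using sum_kernel_mass[OF K_stochastic] by simp
  finally have "(1 - \<gamma>) * (\<Sum>s\<in>S. e s) \<le> 0"
    by (simp add: algebra_simps)
  with \<open>\<gamma> < 1\<close> have "(\<Sum>s\<in>S. e s) \<le> 0"
    by (simp add: mult_le_0_iff)
  then have "e s\<^sub>0 = 0"
    using \<open>finite S\<close> \<open>s\<^sub>0 \<in> S\<close> sum_nonneg_eq_0_iff[of S e] by (simp add: e_def order_antisym sum_nonneg)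
  then show ?thesis
    by (simp add: e_def)
qed

lemma suminf_sum_mult_right:
  fixes h :: "nat \<Rightarrow> 'x \<Rightarrow> real"
  assumes "\<And>s. s \<in> S \<Longrightarrow> summable (\<lambda>t. h t s)"
  shows "(\<Sum>t. \<Sum>s\<in>S. h t s * c s) = (\<Sum>s\<in>S. (\<Sum>t. h t s) * c s)"
  using assms by (simp add: suminf_sum summable_mult2 suminf_mult2)

lemma sum_swap_outer:
  "(\<Sum>i\<in>I. \<Sum>s\<in>S. \<Sum>a\<in>A. g i s a) = (\<Sum>s\<in>S. \<Sum>a\<in>A. \<Sum>i\<in>I. g i s a)"
proof -
  have "(\<Sum>i\<in>I. \<Sum>s\<in>S. \<Sum>a\<in>A. g i s a) = (\<Sum>s\<in>S. \<Sum>i\<in>I. \<Sum>a\<in>A. g i s a)"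
    by (rule sum.swap)
  also have "\<dots> = (\<Sum>s\<in>S. \<Sum>a\<in>A. \<Sum>i\<in>I. g i s a)"
    by (rule sum.cong[OF refl]) (rule sum.swap)
  finally show ?thesis .
qed

locale wcmdp_model =
  fixes M :: "('s, 'a) wcmdp"
  assumes wf: "wf_wcmdp M"
begin

abbreviation "N \<equiv> narms M"
abbreviation "JS \<equiv> joint_states M"
abbreviation "JA \<equiv> joint_actions M"
abbreviation "P \<equiv> joint_trans M"
abbreviation "\<gamma> \<equiv> disc M"

lemma disc_nonneg: "0 \<le> \<gamma>" and disc_less_1: "\<gamma> < 1"
  using wf by (auto simp: wf_wcmdp_def)

lemma finite_joint_states: "finite JS"
  using wf by (auto simp: wf_wcmdp_def joint_states_def intro!: finite_PiE)

lemma finite_joint_actions: "finite JA"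
proof -
  have "finite (PiE {..<N} (Ac M))"
    using wf by (auto simp: wf_wcmdp_def intro!: finite_PiE)
  then show ?thesis
    unfolding joint_actions_def by auto
qed

lemma joint_actions_nonempty: "JA \<noteq> {}"
proof -
  obtain idle where idle: "\<And>n. n < N \<Longrightarrow> idle n \<in> Ac M n \<and> (\<forall>k<nres M. cons M k n (idle n) = 0)"
    using wf unfolding wf_wcmdp_def by metis
  let ?a = "restrict idle {..<N}"
  have "?a \<in> PiE {..<N} (Ac M)"
    using idle by simp
  moreover have "\<forall>k<nres M. (\<Sum>n<N. cons M k n (?a n)) \<le> budget M k"
    using idle wf by (simp add: wf_wcmdp_def)
  ultimately show ?thesis
    unfolding joint_actions_def by blast
qed

lemma joint_states_component: "s \<in> JS \<Longrightarrow> n < N \<Longrightarrow> s n \<in> St M n"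
  by (auto simp: joint_states_def)

lemma joint_actions_component: "a \<in> JA \<Longrightarrow> n < N \<Longrightarrow> a n \<in> Ac M n"
  by (auto simp: joint_actions_def)

lemma joint_trans_nonneg: "s \<in> JS \<Longrightarrow> a \<in> JA \<Longrightarrow> s' \<in> JS \<Longrightarrow> 0 \<le> P s a s'"
  using wf joint_states_component joint_actions_component
  by (auto simp: wf_wcmdp_def joint_trans_def intro!: prod_nonneg)

lemma sum_joint_trans:
  assumes "s \<in> JS" "a \<in> JA"
  shows "(\<Sum>s'\<in>JS. P s a s') = 1"
proof -
  have "(\<Sum>s'\<in>JS. P s a s') = (\<Prod>n<N. \<Sum>y\<in>St M n. trans M n (s n) (a n) y)"
    unfolding joint_trans_def joint_states_def
    by (rule prod_sum_PiE[symmetric]) (use wf in \<open>auto simp: wf_wcmdp_def\<close>)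
  also have "\<dots> = 1"
    using wf assms joint_states_component joint_actions_component
    by (intro prod.neutral) (auto simp: wf_wcmdp_def)
  finally show ?thesis .
qed

lemma init_nonneg: "s \<in> JS \<Longrightarrow> 0 \<le> init M s"
  and sum_init: "(\<Sum>s\<in>JS. init M s) = 1"
  using wf by (auto simp: wf_wcmdp_def)

lemma policy_nonneg: "is_policy M p \<Longrightarrow> s \<in> JS \<Longrightarrow> 0 \<le> p s a"
  and sum_policy: "is_policy M p \<Longrightarrow> s \<in> JS \<Longrightarrow> (\<Sum>a\<in>JA. p s a) = 1"
  by (auto simp: is_policy_def)

definition policy_kernel :: "('s, 'a) state_action_fun \<Rightarrow> (nat \<Rightarrow> 's) \<Rightarrow> (nat \<Rightarrow> 's) \<Rightarrow> real" where
  "policy_kernel p s s' = (\<Sum>a\<in>JA. p s a * P s a s')"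

lemma policy_kernel_nonneg:
  "is_policy M p \<Longrightarrow> s \<in> JS \<Longrightarrow> s' \<in> JS \<Longrightarrow> 0 \<le> policy_kernel p s s'"
  unfolding policy_kernel_def using policy_nonneg joint_trans_nonneg by (auto intro!: sum_nonneg)

lemma sum_policy_kernel:
  assumes "is_policy M p" "s \<in> JS"
  shows "(\<Sum>s'\<in>JS. policy_kernel p s s') = 1"
proof -
  have "(\<Sum>s'\<in>JS. policy_kernel p s s') = (\<Sum>a\<in>JA. p s a * (\<Sum>s'\<in>JS. P s a s'))"
    unfolding policy_kernel_def by (subst sum.swap) (simp add: sum_distrib_left)
  also have "\<dots> = 1"
    using assms by (simp add: sum_joint_trans sum_policy)
  finally show ?thesis .
qed

lemma state_dist_Suc_kernel:
  "state_dist M p (Suc t) s' = (\<Sum>s\<in>JS. state_dist M p t s * policy_kernel p s s')"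
  by (simp add: policy_kernel_def sum_distrib_left mult.assoc)

lemma state_dist_distribution:
  assumes "is_policy M p"
  shows "(\<forall>s\<in>JS. 0 \<le> state_dist M p t s) \<and> (\<Sum>s\<in>JS. state_dist M p t s) = 1"
proof (induction t)
  case 0
  then show ?case
    by (simp add: init_nonneg sum_init)
next
  case (Suc t)
  then show ?case
    using assms sum_kernel_mass[OF sum_policy_kernel[OF assms], where f = "state_dist M p t"]
    by (auto simp only: state_dist_Suc_kernel intro!: sum_nonneg mult_nonneg_nonneg policy_kernel_nonneg)
qed

lemma state_dist_nonneg: "is_policy M p \<Longrightarrow> s \<in> JS \<Longrightarrow> 0 \<le> state_dist M p t s"
  using state_dist_distribution by blast

lemma state_dist_le_1:
  assumes "is_policy M p" "s \<in> JS"
  shows "state_dist M p t s \<le> 1"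
proof -
  have "state_dist M p t s \<le> (\<Sum>s\<in>JS. state_dist M p t s)"
    by (rule member_le_sum) (use assms in \<open>auto intro: state_dist_nonneg finite_joint_states\<close>)
  then show ?thesis
    using state_dist_distribution[OF assms(1)] by simp
qed

definition occupancy :: "('s, 'a) state_action_fun \<Rightarrow> (nat \<Rightarrow> 's) \<Rightarrow> real" where
  "occupancy p s = (\<Sum>t. \<gamma> ^ t * state_dist M p t s)"

lemma summable_occupancy:
  assumes "is_policy M p" "s \<in> JS"
  shows "summable (\<lambda>t. \<gamma> ^ t * state_dist M p t s)"
proof (rule summable_comparison_test)
  show "\<exists>N0. \<forall>t\<ge>N0. norm (\<gamma> ^ t * state_dist M p t s) \<le> \<gamma> ^ t"
    using state_dist_nonneg[OF assms] state_dist_le_1[OF assms] disc_nonneg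
    by (auto simp: abs_mult intro!: mult_left_le)
  show "summable (\<lambda>t. \<gamma> ^ t)"
    using disc_nonneg disc_less_1 by simp
qed

lemma occupancy_nonneg: "is_policy M p \<Longrightarrow> s \<in> JS \<Longrightarrow> 0 \<le> occupancy p s"
  unfolding occupancy_def
  by (intro suminf_nonneg summable_occupancy mult_nonneg_nonneg state_dist_nonneg zero_le_power disc_nonneg)

lemma occupancy_balance:
  assumes "is_policy M p" "s' \<in> JS"
  shows "occupancy p s' = init M s' + \<gamma> * (\<Sum>s\<in>JS. occupancy p s * policy_kernel p s s')"
proof -
  let ?X = "\<lambda>t. \<Sum>s\<in>JS. (\<gamma> ^ t * state_dist M p t s) * policy_kernel p s s'"
  have summable_X: "summable ?X"
    using summable_occupancy[OF assms(1)] by (intro summable_sum summable_mult2) auto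
  have "occupancy p s' = init M s' + (\<Sum>t. \<gamma> ^ Suc t * state_dist M p (Suc t) s')"
    unfolding occupancy_def using suminf_split_head[OF summable_occupancy[OF assms]] by simp
  also have "(\<Sum>t. \<gamma> ^ Suc t * state_dist M p (Suc t) s') = (\<Sum>t. \<gamma> * ?X t)"
    by (simp only: state_dist_Suc_kernel power_Suc) (simp add: sum_distrib_left mult_ac)
  also have "\<dots> = \<gamma> * (\<Sum>t. ?X t)"
    using suminf_mult[OF summable_X] by simp
  also have "(\<Sum>t. ?X t) = (\<Sum>s\<in>JS. occupancy p s * policy_kernel p s s')"
    unfolding occupancy_def by (rule suminf_sum_mult_right) (use summable_occupancy[OF assms(1)] in auto)
  finally show ?thesis .
qed

lemma value_vec_occupancy:
  assumes "is_policy M p"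
  shows "value_vec M p n = (\<Sum>s\<in>JS. \<Sum>a\<in>JA. occupancy p s * p s a * rew M n (s n) (a n))"
proof -
  have "value_vec M p n
      = (\<Sum>t. \<Sum>s\<in>JS. (\<gamma> ^ t * state_dist M p t s) * (\<Sum>a\<in>JA. p s a * rew M n (s n) (a n)))"
    unfolding value_vec_def by (simp add: sum_distrib_left mult_ac)
  also have "\<dots> = (\<Sum>s\<in>JS. occupancy p s * (\<Sum>a\<in>JA. p s a * rew M n (s n) (a n)))"
    unfolding occupancy_def by (rule suminf_sum_mult_right) (use summable_occupancy[OF assms] in auto)
  finally show ?thesis
    by (simp add: sum_distrib_left mult_ac)
qed

definition occupation_measure :: "('s, 'a) state_action_fun \<Rightarrow> ('s, 'a) state_action_fun" where
  "occupation_measure p s a = occupancy p s * p s a"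

definition is_occupation_measure :: "('s, 'a) state_action_fun \<Rightarrow> bool" where
  "is_occupation_measure x \<longleftrightarrow>
     (\<forall>s\<in>JS. \<forall>a\<in>JA. 0 \<le> x s a) \<and>
     (\<forall>s'\<in>JS. (\<Sum>a\<in>JA. x s' a) = init M s' + \<gamma> * (\<Sum>s\<in>JS. \<Sum>a\<in>JA. x s a * P s a s'))"

lemma is_occupation_measure_occupation_measure:
  assumes "is_policy M p"
  shows "is_occupation_measure (occupation_measure p)"
proof -
  have "(\<Sum>a\<in>JA. occupation_measure p s' a)
      = init M s' + \<gamma> * (\<Sum>s\<in>JS. \<Sum>a\<in>JA. occupation_measure p s a * P s a s')"
    if "s' \<in> JS" for s'
  proof -
    have "(\<Sum>a\<in>JA. occupation_measure p s' a) = occupancy p s'"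
      using sum_policy[OF assms that] by (simp add: occupation_measure_def sum_distrib_left[symmetric])
    also have "\<dots> = init M s' + \<gamma> * (\<Sum>s\<in>JS. occupancy p s * policy_kernel p s s')"
      by (rule occupancy_balance[OF assms that])
    finally show ?thesis
      by (simp add: occupation_measure_def policy_kernel_def sum_distrib_left mult.assoc)
  qed
  moreover have "\<forall>s\<in>JS. \<forall>a\<in>JA. 0 \<le> occupation_measure p s a"
    by (simp add: occupation_measure_def occupancy_nonneg policy_nonneg assms)
  ultimately show ?thesis
    unfolding is_occupation_measure_def by blast
qed

text \<open>States of zero mass get the uniform distribution; any action distribution would do.\<close>
definition induced_policy :: "('s, 'a) state_action_fun \<Rightarrow> ('s, 'a) state_action_fun" where
  "induced_policy x s a =
     (if s \<in> JS \<and> a \<in> JA then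
        if 0 < (\<Sum>b\<in>JA. x s b) then x s a / (\<Sum>b\<in>JA. x s b) else 1 / real (card JA)
      else 0)"

lemma is_policy_induced_policy:
  assumes "\<forall>s\<in>JS. \<forall>a\<in>JA. 0 \<le> x s a"
  shows "is_policy M (induced_policy x)"
  unfolding is_policy_def
proof (intro ballI conjI allI impI)
  fix s a
  assume "s \<in> JS"
  then show "0 \<le> induced_policy x s a"
    using assms by (simp add: induced_policy_def)
next
  fix s a
  assume "a \<notin> JA"
  then show "induced_policy x s a = 0"
    by (simp add: induced_policy_def)
next
  fix s
  assume "s \<in> JS"
  then show "(\<Sum>a\<in>JA. induced_policy x s a) = 1"
    using finite_joint_actions joint_actions_nonempty
    by (cases "0 < (\<Sum>b\<in>JA. x s b)") (simp_all add: induced_policy_def sum_divide_distrib[symmetric])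
qed

lemma mass_mult_induced_policy:
  assumes "\<forall>s\<in>JS. \<forall>a\<in>JA. 0 \<le> x s a" "s \<in> JS" "a \<in> JA"
  shows "(\<Sum>b\<in>JA. x s b) * induced_policy x s a = x s a"
proof (cases "0 < (\<Sum>b\<in>JA. x s b)")
  case True
  then show ?thesis
    using assms by (simp add: induced_policy_def)
next
  case False
  moreover have "0 \<le> (\<Sum>b\<in>JA. x s b)"
    using assms by (simp add: sum_nonneg)
  ultimately have "\<forall>b\<in>JA. x s b = 0"
    using assms sum_nonneg_eq_0_iff[OF finite_joint_actions, of "x s"] by simp
  then show ?thesis
    using assms by simp
qed

text \<open>Both sides solve the balance equation of the kernel of the induced policy.\<close>
lemma occupancy_induced_policy:
  assumes x: "is_occupation_measure x" and "s\<^sub>0 \<in> JS"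
  shows "occupancy (induced_policy x) s\<^sub>0 = (\<Sum>a\<in>JA. x s\<^sub>0 a)"
proof -
  let ?q = "induced_policy x"
  have nonneg: "\<forall>s\<in>JS. \<forall>a\<in>JA. 0 \<le> x s a"
    using x by (simp add: is_occupation_measure_def)
  have q: "is_policy M ?q"
    using is_policy_induced_policy[OF nonneg] .
  have mass_balance: "(\<Sum>a\<in>JA. x s' a)
      = init M s' + \<gamma> * (\<Sum>s\<in>JS. (\<Sum>a\<in>JA. x s a) * policy_kernel ?q s s')" if "s' \<in> JS" for s'
  proof -
    have "(\<Sum>a\<in>JA. x s a * P s a s') = (\<Sum>a\<in>JA. x s a) * policy_kernel ?q s s'" if "s \<in> JS" for s
      using mass_mult_induced_policy[OF nonneg that]
      by (simp add: policy_kernel_def sum_distrib_left mult.assoc[symmetric])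
    then show ?thesis
      using x \<open>s' \<in> JS\<close> by (simp add: is_occupation_measure_def)
  qed
  show ?thesis
    by (rule discounted_balance_unique[OF finite_joint_states disc_nonneg disc_less_1
          policy_kernel_nonneg[OF q] sum_policy_kernel[OF q] occupancy_balance[OF q] mass_balance \<open>s\<^sub>0 \<in> JS\<close>])
qed

lemma value_vec_induced_policy:
  assumes x: "is_occupation_measure x"
  shows "value_vec M (induced_policy x) n = (\<Sum>s\<in>JS. \<Sum>a\<in>JA. x s a * rew M n (s n) (a n))"
proof -
  have nonneg: "\<forall>s\<in>JS. \<forall>a\<in>JA. 0 \<le> x s a"
    using x by (simp add: is_occupation_measure_def)
  show ?thesis
    using occupancy_induced_policy[OF x] mass_mult_induced_policy[OF nonneg]
    by (simp add: value_vec_occupancy[OF is_policy_induced_policy[OF nonneg]])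
qed

end

locale symmetric_wcmdp_model = wcmdp_model M for M :: "('s, 'a) wcmdp" +
  assumes sym: "symmetric_wcmdp M"
begin

abbreviation "G \<equiv> {\<sigma>. \<sigma> permutes {..<N}}"

lemma St_eq_St_0: "n < N \<Longrightarrow> St M n = St M 0"
  and Ac_eq_Ac_0: "n < N \<Longrightarrow> Ac M n = Ac M 0"
  using sym unfolding symmetric_wcmdp_def by blast+

lemma rew_eq_rew_0: "n < N \<Longrightarrow> y \<in> St M 0 \<Longrightarrow> b \<in> Ac M 0 \<Longrightarrow> rew M n y b = rew M 0 y b"
  and trans_eq_trans_0:
    "n < N \<Longrightarrow> y \<in> St M 0 \<Longrightarrow> b \<in> Ac M 0 \<Longrightarrow> y' \<in> St M 0 \<Longrightarrow> trans M n y b y' = trans M 0 y b y'"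
  and cons_eq_cons_0: "k < nres M \<Longrightarrow> n < N \<Longrightarrow> b \<in> Ac M 0 \<Longrightarrow> cons M k n b = cons M k 0 b"
  using sym unfolding symmetric_wcmdp_def by blast+

lemma init_permute: "\<sigma> permutes {..<N} \<Longrightarrow> s \<in> JS \<Longrightarrow> init M (permute \<sigma> s) = init M s"
  using sym unfolding symmetric_wcmdp_def by metis

lemma joint_states_eq: "JS = PiE {..<N} (\<lambda>_. St M 0)"
  unfolding joint_states_def by (rule PiE_cong) (rule St_eq_St_0, simp)

lemma joint_actions_eq:
  "JA = {a \<in> PiE {..<N} (\<lambda>_. Ac M 0). \<forall>k<nres M. (\<Sum>n<N. cons M k 0 (a n)) \<le> budget M k}"
proof -
  have PiE_Ac: "PiE {..<N} (Ac M) = PiE {..<N} (\<lambda>_. Ac M 0)"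
    by (rule PiE_cong) (rule Ac_eq_Ac_0, simp)
  have "(\<Sum>n<N. cons M k n (a n)) = (\<Sum>n<N. cons M k 0 (a n))"
    if "a \<in> PiE {..<N} (\<lambda>_. Ac M 0)" "k < nres M" for a k
    using that by (intro sum.cong refl cons_eq_cons_0) auto
  then show ?thesis
    unfolding joint_actions_def PiE_Ac by auto
qed

lemma permute_in_joint_states_iff: "\<sigma> permutes {..<N} \<Longrightarrow> permute \<sigma> s \<in> JS \<longleftrightarrow> s \<in> JS"
  by (simp add: joint_states_eq permute_in_PiE_iff)

lemma permute_in_joint_actions_iff:
  assumes "\<sigma> permutes {..<N}"
  shows "permute \<sigma> a \<in> JA \<longleftrightarrow> a \<in> JA"
proof -
  have "(\<Sum>n<N. cons M k 0 (permute \<sigma> a n)) = (\<Sum>n<N. cons M k 0 (a n))" for k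
    using sum.permute[OF assms, of "\<lambda>n. cons M k 0 (a n)"] by (simp add: permute_def comp_def)
  then show ?thesis
    by (simp add: joint_actions_eq permute_in_PiE_iff[OF assms])
qed

lemma sum_joint_permute:
  assumes \<sigma>: "\<sigma> permutes {..<N}"
  shows "(\<Sum>s\<in>JS. \<Sum>a\<in>JA. f (permute \<sigma> s) (permute \<sigma> a)) = (\<Sum>s\<in>JS. \<Sum>a\<in>JA. f s a)"
proof -
  have "(\<Sum>s\<in>JS. \<Sum>a\<in>JA. f (permute \<sigma> s) (permute \<sigma> a)) = (\<Sum>s\<in>JS. \<Sum>a\<in>JA. f (permute \<sigma> s) a)"
    by (intro sum.cong refl sum_permute_reindex[OF \<sigma> permute_in_joint_actions_iff[OF \<sigma>]])
  also have "\<dots> = (\<Sum>s\<in>JS. \<Sum>a\<in>JA. f s a)"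
    by (rule sum_permute_reindex[OF \<sigma> permute_in_joint_states_iff[OF \<sigma>], where g = "\<lambda>s. \<Sum>a\<in>JA. f s a"])
  finally show ?thesis .
qed

lemma joint_trans_eq:
  "s \<in> JS \<Longrightarrow> a \<in> JA \<Longrightarrow> s' \<in> JS \<Longrightarrow> P s a s' = (\<Prod>n<N. trans M 0 (s n) (a n) (s' n))"
  unfolding joint_trans_def joint_states_eq joint_actions_eq
  by (intro prod.cong refl trans_eq_trans_0) auto

lemma joint_trans_permute:
  assumes \<sigma>: "\<sigma> permutes {..<N}" and "s \<in> JS" "a \<in> JA" "s' \<in> JS"
  shows "P (permute \<sigma> s) (permute \<sigma> a) (permute \<sigma> s') = P s a s'"
proof -
  have "permute \<sigma> s \<in> JS" "permute \<sigma> a \<in> JA" "permute \<sigma> s' \<in> JS"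
    using assms by (simp_all add: permute_in_joint_states_iff permute_in_joint_actions_iff)
  then have "P (permute \<sigma> s) (permute \<sigma> a) (permute \<sigma> s')
      = (\<Prod>n<N. trans M 0 (s (\<sigma> n)) (a (\<sigma> n)) (s' (\<sigma> n)))"
    by (simp add: joint_trans_eq permute_def)
  also have "\<dots> = (\<Prod>n<N. trans M 0 (s n) (a n) (s' n))"
    using prod.permute[OF \<sigma>, of "\<lambda>n. trans M 0 (s n) (a n) (s' n)"] by (simp add: comp_def)
  also have "\<dots> = P s a s'"
    using assms by (simp add: joint_trans_eq)
  finally show ?thesis .
qed

lemma is_occupation_measure_permute:
  assumes x: "is_occupation_measure x" and \<sigma>: "\<sigma> permutes {..<N}"
  shows "is_occupation_measure (\<lambda>s a. x (permute \<sigma> s) (permute \<sigma> a))"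
proof -
  note states = permute_in_joint_states_iff[OF \<sigma>] and actions = permute_in_joint_actions_iff[OF \<sigma>]
  have "(\<Sum>a\<in>JA. x (permute \<sigma> s') (permute \<sigma> a))
      = init M s' + \<gamma> * (\<Sum>s\<in>JS. \<Sum>a\<in>JA. x (permute \<sigma> s) (permute \<sigma> a) * P s a s')"
    if s': "s' \<in> JS" for s'
  proof -
    have "(\<Sum>a\<in>JA. x (permute \<sigma> s') (permute \<sigma> a)) = (\<Sum>a\<in>JA. x (permute \<sigma> s') a)"
      by (rule sum_permute_reindex[OF \<sigma> actions])
    also have "\<dots> = init M s' + \<gamma> * (\<Sum>s\<in>JS. \<Sum>a\<in>JA. x s a * P s a (permute \<sigma> s'))"
      using x s' by (simp add: is_occupation_measure_def states init_permute[OF \<sigma>])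
    also have "(\<Sum>s\<in>JS. \<Sum>a\<in>JA. x s a * P s a (permute \<sigma> s'))
        = (\<Sum>s\<in>JS. \<Sum>a\<in>JA. x (permute \<sigma> s) (permute \<sigma> a) * P (permute \<sigma> s) (permute \<sigma> a) (permute \<sigma> s'))"
      by (rule sum_joint_permute[OF \<sigma>, symmetric])
    also have "\<dots> = (\<Sum>s\<in>JS. \<Sum>a\<in>JA. x (permute \<sigma> s) (permute \<sigma> a) * P s a s')"
      using s' by (intro sum.cong refl) (simp add: joint_trans_permute[OF \<sigma>])
    finally show ?thesis .
  qed
  then show ?thesis
    using x by (simp add: is_occupation_measure_def states actions)
qed

lemma is_occupation_measure_mean:
  assumes "finite I" "I \<noteq> {}" and x: "\<And>i. i \<in> I \<Longrightarrow> is_occupation_measure (x i)"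
  shows "is_occupation_measure (\<lambda>s a. (\<Sum>i\<in>I. x i s a) / card I)"
proof -
  have "(\<Sum>a\<in>JA. (\<Sum>i\<in>I. x i s' a) / card I)
      = init M s' + \<gamma> * (\<Sum>s\<in>JS. \<Sum>a\<in>JA. (\<Sum>i\<in>I. x i s a) / card I * P s a s')"
    if s': "s' \<in> JS" for s'
  proof -
    have "(\<Sum>a\<in>JA. (\<Sum>i\<in>I. x i s' a) / card I) = (\<Sum>i\<in>I. \<Sum>a\<in>JA. x i s' a) / card I"
      by (subst sum.swap) (simp add: sum_divide_distrib)
    also have "\<dots> = (\<Sum>i\<in>I. init M s' + \<gamma> * (\<Sum>s\<in>JS. \<Sum>a\<in>JA. x i s a * P s a s')) / card I"
      using x s' by (simp add: is_occupation_measure_def)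
    also have "\<dots> = init M s' + \<gamma> * ((\<Sum>i\<in>I. \<Sum>s\<in>JS. \<Sum>a\<in>JA. x i s a * P s a s') / card I)"
      using assms(1,2) by (simp add: sum.distrib sum_distrib_left add_divide_distrib)
    also have "(\<Sum>i\<in>I. \<Sum>s\<in>JS. \<Sum>a\<in>JA. x i s a * P s a s') / card I
        = (\<Sum>s\<in>JS. \<Sum>a\<in>JA. (\<Sum>i\<in>I. x i s a) / card I * P s a s')"
      by (subst sum_swap_outer) (simp add: sum_divide_distrib sum_distrib_right)
    finally show ?thesis .
  qed
  moreover have "\<forall>s\<in>JS. \<forall>a\<in>JA. 0 \<le> (\<Sum>i\<in>I. x i s a) / card I"
    using x by (auto simp: is_occupation_measure_def intro!: divide_nonneg_nonneg sum_nonneg)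
  ultimately show ?thesis
    unfolding is_occupation_measure_def by blast
qed

definition symmetrize :: "('s, 'a) state_action_fun \<Rightarrow> ('s, 'a) state_action_fun" where
  "symmetrize x s a = (\<Sum>\<sigma>\<in>G. x (permute \<sigma> s) (permute \<sigma> a)) / fact N"

lemma symmetrize_permute:
  assumes "\<sigma> permutes {..<N}"
  shows "symmetrize x (permute \<sigma> s) (permute \<sigma> a) = symmetrize x s a"
  using setum_permutations_compose_left[OF assms, of "\<lambda>\<tau>. x (permute \<tau> s) (permute \<tau> a)"]
  by (simp add: symmetrize_def permute_permute)

lemma is_occupation_measure_symmetrize:
  assumes "is_occupation_measure x"
  shows "is_occupation_measure (symmetrize x)"
proof -
  have "card G = fact N"
    using card_permutations[of "{..<N}" N] by simp
  moreover have "finite G" "G \<noteq> {}"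
    using finite_permutations[of "{..<N}"] permutes_id[of "{..<N}"] by blast+
  ultimately show ?thesis
    using is_occupation_measure_mean[of G "\<lambda>\<sigma> s a. x (permute \<sigma> s) (permute \<sigma> a)"]
      is_occupation_measure_permute[OF assms]
    by (simp add: symmetrize_def[abs_def])
qed

lemma perm_invariant_induced_policy:
  assumes x: "\<And>\<sigma> s a. \<sigma> permutes {..<N} \<Longrightarrow> x (permute \<sigma> s) (permute \<sigma> a) = x s a"
  shows "perm_invariant M (induced_policy x)"
  unfolding perm_invariant_def
proof (intro allI impI)
  fix \<sigma> s a
  assume \<sigma>: "\<sigma> permutes {..<N}"
  have "(\<Sum>b\<in>JA. x (permute \<sigma> s) b) = (\<Sum>b\<in>JA. x s b)"
    using sum_permute_reindex[OF \<sigma> permute_in_joint_actions_iff[OF \<sigma>], of "x (permute \<sigma> s)"]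
    by (simp add: x[OF \<sigma>])
  then show "induced_policy x s a = induced_policy x (permute \<sigma> s) (permute \<sigma> a)"
    by (simp add: induced_policy_def x[OF \<sigma>] permute_in_joint_states_iff[OF \<sigma>]
        permute_in_joint_actions_iff[OF \<sigma>])
qed

lemma value_vec_permute:
  assumes p: "is_policy M p" and \<sigma>: "\<sigma> permutes {..<N}" and "n < N"
  shows "(\<Sum>s\<in>JS. \<Sum>a\<in>JA. occupation_measure p (permute \<sigma> s) (permute \<sigma> a) * rew M n (s n) (a n))
       = value_vec M p (inv \<sigma> n)"
proof -
  have \<sigma>': "inv \<sigma> permutes {..<N}"
    using permutes_inv[OF \<sigma>] .
  have m: "inv \<sigma> n < N"
    using permutes_in_image[OF \<sigma>'] \<open>n < N\<close> by simp
  have "(\<Sum>s\<in>JS. \<Sum>a\<in>JA. occupation_measure p (permute \<sigma> s) (permute \<sigma> a) * rew M n (s n) (a n))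
      = (\<Sum>s\<in>JS. \<Sum>a\<in>JA. occupation_measure p (permute \<sigma> (permute (inv \<sigma>) s)) (permute \<sigma> (permute (inv \<sigma>) a))
            * rew M n (permute (inv \<sigma>) s n) (permute (inv \<sigma>) a n))"
    by (rule sum_joint_permute[OF \<sigma>', symmetric])
  also have "\<dots> = (\<Sum>s\<in>JS. \<Sum>a\<in>JA. occupation_measure p s a * rew M n (s (inv \<sigma> n)) (a (inv \<sigma> n)))"
    by (simp add: permute_permute_inv[OF \<sigma>]) (simp add: permute_def)
  also have "\<dots> = (\<Sum>s\<in>JS. \<Sum>a\<in>JA. occupation_measure p s a * rew M (inv \<sigma> n) (s (inv \<sigma> n)) (a (inv \<sigma> n)))"
  proof (intro sum.cong refl)
    fix s a
    assume "s \<in> JS" "a \<in> JA"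
    then have "s (inv \<sigma> n) \<in> St M 0" "a (inv \<sigma> n) \<in> Ac M 0"
      using m by (auto simp: joint_states_eq joint_actions_eq)
    then show "occupation_measure p s a * rew M n (s (inv \<sigma> n)) (a (inv \<sigma> n))
        = occupation_measure p s a * rew M (inv \<sigma> n) (s (inv \<sigma> n)) (a (inv \<sigma> n))"
      using rew_eq_rew_0[OF \<open>n < N\<close>] rew_eq_rew_0[OF m] by simp
  qed
  also have "\<dots> = value_vec M p (inv \<sigma> n)"
    by (simp add: value_vec_occupancy[OF p] occupation_measure_def)
  finally show ?thesis .
qed

lemma value_vec_symmetrize:
  assumes p: "is_policy M p" and "n < N"
  shows "value_vec M (induced_policy (symmetrize (occupation_measure p))) n
       = 1 / real N * (\<Sum>m<N. value_vec M p m)"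
proof -
  let ?x = "occupation_measure p"
  have "value_vec M (induced_policy (symmetrize ?x)) n
      = (\<Sum>s\<in>JS. \<Sum>a\<in>JA. symmetrize ?x s a * rew M n (s n) (a n))"
    by (rule value_vec_induced_policy[OF is_occupation_measure_symmetrize[OF
          is_occupation_measure_occupation_measure[OF p]]])
  also have "\<dots> = (\<Sum>\<sigma>\<in>G. \<Sum>s\<in>JS. \<Sum>a\<in>JA. ?x (permute \<sigma> s) (permute \<sigma> a) * rew M n (s n) (a n)) / fact N"
    by (subst sum_swap_outer) (simp add: symmetrize_def sum_divide_distrib sum_distrib_right)
  also have "\<dots> = (\<Sum>\<sigma>\<in>G. value_vec M p (inv \<sigma> n)) / fact N"
    using value_vec_permute[OF p _ \<open>n < N\<close>] by simp
  also have "\<dots> = (\<Sum>\<sigma>\<in>G. value_vec M p (\<sigma> n)) / fact N"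
    using sum_permutations_inverse[of "\<lambda>\<sigma>. value_vec M p (\<sigma> n)" "{..<N}"] by simp
  also have "\<dots> = 1 / real N * (\<Sum>m<N. value_vec M p m)"
    using sum_permutations_apply[of "{..<N}" n "value_vec M p"] \<open>n < N\<close>
    by (simp add: field_simps)
  finally show ?thesis .
qed

end

theorem lemma3p1:
  fixes M :: "('s, 'a) wcmdp"
    and \<pi> :: "(nat \<Rightarrow> 's) \<Rightarrow> (nat \<Rightarrow> 'a) \<Rightarrow> real"
  assumes "wf_wcmdp M"
    and "symmetric_wcmdp M"
    and "is_policy M \<pi>"
  shows "\<exists>\<pi>'. is_policy M \<pi>' \<and> perm_invariant M \<pi>' \<and>
           (\<forall>n<narms M. value_vec M \<pi>' n
              = (1 / real (narms M)) * (\<Sum>m<narms M. value_vec M \<pi> m))"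
proof -
  interpret symmetric_wcmdp_model M
    using assms(1,2) by unfold_locales
  let ?x = "symmetrize (occupation_measure \<pi>)"
  have "is_occupation_measure ?x"
    by (rule is_occupation_measure_symmetrize[OF is_occupation_measure_occupation_measure[OF assms(3)]])
  then have "is_policy M (induced_policy ?x)"
    by (simp add: is_occupation_measure_def is_policy_induced_policy)
  moreover have "perm_invariant M (induced_policy ?x)"
    by (rule perm_invariant_induced_policy) (rule symmetrize_permute)
  ultimately show ?thesis
    using value_vec_symmetrize[OF assms(3)] by blast
qed

end
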